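(* Let $n\geq1$. If $\psi$ is a Toom cycle in $G=G_{2n}(\mathbb T\ltimes\mathbb N^2)$ or in $G=G_{2n}(\mathbb N^2\ltimes\mathbb N^2)$, then there exists an integer $m\geq1$ such that: - the number of steps of each of the types su, sd, lu, ld, ru, rd in $\psi$ equals $m$; - $\psi$ passes through precisely $m+1$ distinct possible outcomes of the game (elements of $\partial G$).
   Context: **Decision graphs.** - $\mathbb T$ is the set of finite words over $\{1,2\}$ with root $\varnothing$, edges $\mathbf i\to\mathbf ik$, and $|\mathbf i|$ = length. - $\mathbb N^2$ has root $(0,0)$ and edges $(i,j)\to(i,j)1:=(i+1,j)$ and $(i,j)\to(i,j)2:=(i,j+1)$, with $|(i,j)|=i+j$. **Product and game-graph.** For $D^1\in\{\mathbb T,\mathbb N^2\}$, $D^1\ltimes\mathbb N^2$ has as vertices the pairs $(a,b)$ with $|a|=|b|$ (level $2|b|$) or $|a|=|b|+1$ (level $2|b|+1$), root $(0,0)$, edges $(a,b)\to(ak,b)$ from even levels and $(a,b)\to(a,bk)$ from odd levels. $G_{2n}(D^1\ltimes\mathbb N^2)$ is its restriction to levels $\leq 2n$. Level $2n$ is $\partial G$ (possible outcomes); interior vertices at even levels are Alice's turn and those at odd levels are Bob's. Let $\mathring G$ be the non-outcome vertices, $\vec A$ the set of edges $((a,b),(ak,b))$ from Alice-turn vertices, and $\vec B_k$ the set of edges $((a,b),(a,bk))$ from Bob-turn vertices. **Walks and step types.** A walk is $\psi_0\cdots\psi_l$ with each consecutive pair an edge or a reversed edge. The $k$-th step is: - su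 if $(\psi_{k-1},\psi_k)\in\vec A$, and sd if $(\psi_k,\psi_{k-1})\in\vec A$; - lu if $(\psi_{k-1},\psi_k)\in\vec B_2$, and ld if $(\psi_k,\psi_{k-1})\in\vec B_1$; - ru if $(\psi_{k-1},\psi_k)\in\vec B_1$, and rd if $(\psi_k,\psi_{k-1})\in\vec B_2$. Up types are su, lu, ru; down types are sd, ld, rd. Let - $N_\uparrow=\{0\}\cup\{0<k<l:$ steps $k,k+1$ up$\}$, - $N_\circ=\{0<k<l:$ step $k$ down, $k+1$ up$\}$, - $N_\downarrow=\{l\}\cup\{0<k<l:$ both down$\}$, - $N_\ast=\{0<k<l:$ step $k$ up, $k+1$ down$\}$. **Toom cycle.** A Toom cycle is a walk with $l\geq2$ satisfying all of the following. - $\psi_0=\psi_l=$ root; the first step is su or ru; the last step is sd or rd. - For $0<k<l$ with $\psi_k\in\mathring G$, the only allowed (step $k$ $\to$ step $k+1$) combinations are su$\to$ru, ru$\to$su, lu$\to$su, sd$\to$rd or ld, rd$\to$sd, ld$\to$lu. - For $\psi_k\in\partial G$, the only allowed combinations are su$\to$sd, ru$\to$rd or ld, lu$\to$rd or ld. - (i) $\psi_k\neq\psi_m$ for distinct $k,m\in N_\ast$. - (ii) If $\psi_k=\psi_m$ with $k\in N_s$, $m\in N_t$, $s\leq t$ in the order $\uparrow<\circ<\downarrow$, then $k\leq m$. *)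

theory Defs
  imports Main
begin

record 'd dgraph =
  dvert :: "'d set"
  dext  :: "'d \<Rightarrow> nat \<Rightarrow> 'd"
  dlen  :: "'d \<Rightarrow> nat"
  droot :: 'd

definition ext2 :: "nat \<times> nat \<Rightarrow> nat \<Rightarrow> nat \<times> nat" where
  "ext2 p k = (if k = 1 then (fst p + 1, snd p) else (fst p, snd p + 1))"

definition len2 :: "nat \<times> nat \<Rightarrow> nat" where
  "len2 p = fst p + snd p"

definition T_graph :: "nat list dgraph" where
  "T_graph = \<lparr> dvert = {w. set w \<subseteq> {1,2}}, dext = (\<lambda>w k. w @ [k]),
               dlen = length, droot = [] \<rparr>"

definition N2_graph :: "(nat \<times> nat) dgraph" where
  "N2_graph = \<lparr> dvert = UNIV, dext = ext2, dlen = len2, droot = (0,0) \<rparr>"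

type_synonym 'd gvert = "'d \<times> (nat \<times> nat)"

definition lvl :: "'d dgraph \<Rightarrow> 'd gvert \<Rightarrow> nat" where
  "lvl G v = (if dlen G (fst v) = len2 (snd v) then 2 * len2 (snd v)
              else 2 * len2 (snd v) + 1)"

definition verts :: "'d dgraph \<Rightarrow> nat \<Rightarrow> 'd gvert set" where
  "verts G n = {(a,b). a \<in> dvert G \<and> (dlen G a = len2 b \<or> dlen G a = len2 b + 1)
                       \<and> lvl G (a,b) \<le> 2 * n}"

definition groot :: "'d dgraph \<Rightarrow> 'd gvert" where
  "groot G = (droot G, (0,0))"

definition bnd :: "'d dgraph \<Rightarrow> nat \<Rightarrow> 'd gvert set" where
  "bnd G n = {v \<in> verts G n. lvl G v = 2 * n}"

definition inner :: "'d dgraph \<Rightarrow> nat \<Rightarrow> 'd gvert set" where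
  "inner G n = {v \<in> verts G n. lvl G v < 2 * n}"

definition edgesA :: "'d dgraph \<Rightarrow> nat \<Rightarrow> ('d gvert \<times> 'd gvert) set" where
  "edgesA G n = {((a,b), (dext G a k, b)) | a b k.
      (a,b) \<in> inner G n \<and> even (lvl G (a,b)) \<and> k \<in> {1,2} \<and> (dext G a k, b) \<in> verts G n}"

definition edgesB :: "'d dgraph \<Rightarrow> nat \<Rightarrow> nat \<Rightarrow> ('d gvert \<times> 'd gvert) set" where
  "edgesB G n k = {((a,b), (a, ext2 b k)) | a b.
      (a,b) \<in> inner G n \<and> odd (lvl G (a,b)) \<and> (a, ext2 b k) \<in> verts G n}"

definition edges :: "'d dgraph \<Rightarrow> nat \<Rightarrow> ('d gvert \<times> 'd gvert) set" where
  "edges G n = edgesA G n \<union> edgesB G n 1 \<union> edgesB G n 2"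

text \<open>A walk psi_0 ... psi_l is represented as a nonempty list of length l+1.\<close>
definition is_walk :: "'d dgraph \<Rightarrow> nat \<Rightarrow> 'd gvert list \<Rightarrow> bool" where
  "is_walk G n \<psi> \<longleftrightarrow> \<psi> \<noteq> [] \<and> set \<psi> \<subseteq> verts G n \<and>
     (\<forall>k \<in> {1..<length \<psi>}. (\<psi>!(k-1), \<psi>!k) \<in> edges G n \<or> (\<psi>!k, \<psi>!(k-1)) \<in> edges G n)"

datatype stype = SU | SD | LU | LD | RU | RD

text \<open>The k-th step (from psi_{k-1} to psi_k) has type t.\<close>
definition step :: "'d dgraph \<Rightarrow> nat \<Rightarrow> 'd gvert list \<Rightarrow> nat \<Rightarrow> stype \<Rightarrow> bool" where
  "step G n \<psi> k t = (case t of
      SU \<Rightarrow> (\<psi>!(k-1), \<psi>!k) \<in> edgesA G n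
    | SD \<Rightarrow> (\<psi>!k, \<psi>!(k-1)) \<in> edgesA G n
    | LU \<Rightarrow> (\<psi>!(k-1), \<psi>!k) \<in> edgesB G n 2
    | LD \<Rightarrow> (\<psi>!k, \<psi>!(k-1)) \<in> edgesB G n 1
    | RU \<Rightarrow> (\<psi>!(k-1), \<psi>!k) \<in> edgesB G n 1
    | RD \<Rightarrow> (\<psi>!k, \<psi>!(k-1)) \<in> edgesB G n 2)"

definition step_up :: "'d dgraph \<Rightarrow> nat \<Rightarrow> 'd gvert list \<Rightarrow> nat \<Rightarrow> bool" where
  "step_up G n \<psi> k \<longleftrightarrow> step G n \<psi> k SU \<or> step G n \<psi> k LU \<or> step G n \<psi> k RU"

definition step_down :: "'d dgraph \<Rightarrow> nat \<Rightarrow> 'd gvert list \<Rightarrow> nat \<Rightarrow> bool" where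
  "step_down G n \<psi> k \<longleftrightarrow> step G n \<psi> k SD \<or> step G n \<psi> k LD \<or> step G n \<psi> k RD"

text \<open>N_up, N_circ, N_down, N_ast; here l = length psi - 1.\<close>
definition N_up :: "'d dgraph \<Rightarrow> nat \<Rightarrow> 'd gvert list \<Rightarrow> nat set" where
  "N_up G n \<psi> = {0} \<union> {k. 0 < k \<and> k < length \<psi> - 1 \<and> step_up G n \<psi> k \<and> step_up G n \<psi> (k+1)}"

definition N_circ :: "'d dgraph \<Rightarrow> nat \<Rightarrow> 'd gvert list \<Rightarrow> nat set" where
  "N_circ G n \<psi> = {k. 0 < k \<and> k < length \<psi> - 1 \<and> step_down G n \<psi> k \<and> step_up G n \<psi> (k+1)}"

definition N_down :: "'d dgraph \<Rightarrow> nat \<Rightarrow> 'd gvert list \<Rightarrow> nat set" where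
  "N_down G n \<psi> = {length \<psi> - 1} \<union>
     {k. 0 < k \<and> k < length \<psi> - 1 \<and> step_down G n \<psi> k \<and> step_down G n \<psi> (k+1)}"

definition N_ast :: "'d dgraph \<Rightarrow> nat \<Rightarrow> 'd gvert list \<Rightarrow> nat set" where
  "N_ast G n \<psi> = {k. 0 < k \<and> k < length \<psi> - 1 \<and> step_up G n \<psi> k \<and> step_down G n \<psi> (k+1)}"

text \<open>The classes ordered up < circ < down, indexed 0 < 1 < 2.\<close>
definition N_cls :: "'d dgraph \<Rightarrow> nat \<Rightarrow> 'd gvert list \<Rightarrow> nat \<Rightarrow> nat set" where
  "N_cls G n \<psi> i = (if i = 0 then N_up G n \<psi> else if i = 1 then N_circ G n \<psi>
                     else if i = 2 then N_down G n \<psi> else {})"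

definition allowed_inner :: "(stype \<times> stype) set" where
  "allowed_inner = {(SU,RU), (RU,SU), (LU,SU), (SD,RD), (SD,LD), (RD,SD), (LD,LU)}"

definition allowed_bnd :: "(stype \<times> stype) set" where
  "allowed_bnd = {(SU,SD), (RU,RD), (RU,LD), (LU,RD), (LU,LD)}"

definition toom_cycle :: "'d dgraph \<Rightarrow> nat \<Rightarrow> 'd gvert list \<Rightarrow> bool" where
  "toom_cycle G n \<psi> \<longleftrightarrow>
     (let l = length \<psi> - 1 in
      is_walk G n \<psi> \<and> l \<ge> 2 \<and>
      \<psi>!0 = groot G \<and> \<psi>!l = groot G \<and>
      (step G n \<psi> 1 SU \<or> step G n \<psi> 1 RU) \<and>
      (step G n \<psi> l SD \<or> step G n \<psi> l RD) \<and>
      (\<forall>k. 0 < k \<and> k < l \<and> \<psi>!k \<in> inner G n \<longrightarrow>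
          (\<exists>(s,t) \<in> allowed_inner. step G n \<psi> k s \<and> step G n \<psi> (k+1) t)) \<and>
      (\<forall>k. 0 < k \<and> k < l \<and> \<psi>!k \<in> bnd G n \<longrightarrow>
          (\<exists>(s,t) \<in> allowed_bnd. step G n \<psi> k s \<and> step G n \<psi> (k+1) t)) \<and>
      (\<forall>k m. k \<in> N_ast G n \<psi> \<and> m \<in> N_ast G n \<psi> \<and> k \<noteq> m \<longrightarrow> \<psi>!k \<noteq> \<psi>!m) \<and>
      (\<forall>s t k m. s \<le> t \<and> t \<le> 2 \<and> k \<in> N_cls G n \<psi> s \<and> m \<in> N_cls G n \<psi> t \<and>
          \<psi>!k = \<psi>!m \<longrightarrow> k \<le> m))"

definition nsteps :: "'d dgraph \<Rightarrow> nat \<Rightarrow> 'd gvert list \<Rightarrow> stype \<Rightarrow> nat" where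
  "nsteps G n \<psi> t = card {k \<in> {1..length \<psi> - 1}. step G n \<psi> k t}"

end

theory Submission
  imports Defs
begin

(* Each step changes exactly one of the three coordinates of a vertex (a, (b1, b2)) by one:
   su/sd change |a|, ru/ld change b1 and lu/rd change b2. As a Toom cycle is a closed walk,
   #su = #sd, #ru = #ld and #lu = #rd. The turning rules at the odd-level (Bob) vertices force
   su steps to be followed by ru steps and ld steps by lu steps, and conversely, so
   #su = #ru and #ld = #lu. Finally, the outcomes on the cycle are exactly the vertices at its
   peaks (N_ast), which are pairwise distinct by (i), while its valleys (N_circ) are exactly
   the ld steps; since the cycle starts going up and ends going down, it has one more peak
   than valleys. *)

lemma card_diff_eq_telescoping:
  fixes f :: "nat \<Rightarrow> int"
  assumes "m \<le> n" and "A \<subseteq> {m<..n}" and "B \<subseteq> {m<..n}"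
    and "\<And>k. k \<in> {m<..n} \<Longrightarrow> f k - f (k - 1) = of_bool (k \<in> A) - of_bool (k \<in> B)"
  shows "int (card A) - int (card B) = f n - f m"
proof -
  have "f n - f m = (\<Sum>k = m..<n. f (Suc k) - f k)"
    using assms(1) by (simp add: sum_Suc_diff')
  also have "\<dots> = (\<Sum>k \<in> {m<..n}. f k - f (k - 1))"
  proof -
    have "{m<..n} = Suc ` {m..<n}" by (auto simp: image_iff)
    then show ?thesis by (simp only:) (subst sum.reindex, simp_all)
  qed
  also have "\<dots> = (\<Sum>k \<in> {m<..n}. of_bool (k \<in> A) - of_bool (k \<in> B))"
    using assms(4) by (rule sum.cong[OF refl])
  also have "\<dots> = int (card A) - int (card B)"
    using assms(2,3) by (simp add: sum_subtractf Int_absorb1)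
  finally show ?thesis ..
qed

fun is_up :: "stype \<Rightarrow> bool" where
  "is_up SU = True" | "is_up LU = True" | "is_up RU = True" | "is_up _ = False"

lemma step_up_iff: "step_up G n \<psi> k \<longleftrightarrow> (\<exists>t. is_up t \<and> step G n \<psi> k t)"
  unfolding step_up_def by (metis is_up.simps stype.exhaust)

lemma step_down_iff: "step_down G n \<psi> k \<longleftrightarrow> (\<exists>t. \<not> is_up t \<and> step G n \<psi> k t)"
  unfolding step_down_def by (metis is_up.simps stype.exhaust)

lemma allowed_bnd_up_down: "(s, t) \<in> allowed_bnd \<Longrightarrow> is_up s \<and> \<not> is_up t"
  by (auto simp: allowed_bnd_def)

lemma allowed_inner_up_up: "(s, t) \<in> allowed_inner \<Longrightarrow> is_up s \<Longrightarrow> is_up t"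
  by (auto simp: allowed_inner_def)

lemma allowed_inner_down_up: "(s, t) \<in> allowed_inner \<Longrightarrow> \<not> is_up s \<Longrightarrow> is_up t \<Longrightarrow> s = LD"
  by (auto simp: allowed_inner_def)

lemma lvl_edgesB: "(x, y) \<in> edgesB G n j \<Longrightarrow> lvl G y = Suc (lvl G x) \<and> odd (lvl G x)"
  unfolding edgesB_def inner_def verts_def lvl_def by (auto simp: len2_def ext2_def split: if_splits)

lemma step_exists:
  assumes "is_walk G n \<psi>" and "k \<in> {1..<length \<psi>}"
  shows "\<exists>t. step G n \<psi> k t"
proof -
  have "(\<psi>!(k-1), \<psi>!k) \<in> edges G n \<or> (\<psi>!k, \<psi>!(k-1)) \<in> edges G n"
    using assms unfolding is_walk_def by blast
  then show ?thesis
    unfolding edges_def step_def by (metis Un_iff stype.simps(31-36))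
qed

locale graded_dgraph =
  fixes G :: "'d dgraph"
  assumes dlen_dext: "dlen G (dext G a k) = Suc (dlen G a)"
    and dlen_droot: "dlen G (droot G) = 0"
begin

lemma lvl_edgesA: "(x, y) \<in> edgesA G n \<Longrightarrow> lvl G y = Suc (lvl G x) \<and> even (lvl G x)"
  unfolding edgesA_def inner_def verts_def lvl_def by (auto simp: dlen_dext split: if_splits)

lemma lvl_groot: "lvl G (groot G) = 0"
  by (simp add: lvl_def groot_def len2_def dlen_droot)

lemma lvl_step_up:
  assumes "step G n \<psi> k t" and "is_up t"
  shows "lvl G (\<psi>!k) = Suc (lvl G (\<psi>!(k-1))) \<and> (even (lvl G (\<psi>!(k-1))) \<longleftrightarrow> t = SU)"
  using assms by (cases t) (auto simp: step_def dest: lvl_edgesA lvl_edgesB)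

lemma lvl_step_down:
  assumes "step G n \<psi> k t" and "\<not> is_up t"
  shows "lvl G (\<psi>!(k-1)) = Suc (lvl G (\<psi>!k)) \<and> (even (lvl G (\<psi>!k)) \<longleftrightarrow> t = SD)"
  using assms by (cases t) (auto simp: step_def dest: lvl_edgesA lvl_edgesB)

lemma step_unique:
  assumes s: "step G n \<psi> k s" and t: "step G n \<psi> k t"
  shows "s = t"
proof (cases "is_up s = is_up t")
  case True
  have parity: "s \<in> {SU, SD} \<longleftrightarrow> t \<in> {SU, SD}"
    using True lvl_step_up[OF s] lvl_step_up[OF t] lvl_step_down[OF s] lvl_step_down[OF t]
    by (cases "is_up s") auto
  have "edgesB G n 1 \<inter> edgesB G n 2 = {}"
    by (auto simp: edgesB_def ext2_def prod_eq_iff)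
  with True parity s t show ?thesis
    by (cases s; cases t) (auto simp: step_def)
next
  case False
  then show ?thesis
    using lvl_step_up[OF s] lvl_step_up[OF t] lvl_step_down[OF s] lvl_step_down[OF t]
    by (cases "is_up s") auto
qed

lemma step_coordinate_changes:
  assumes "step G n \<psi> k t"
  shows "int (dlen G (fst (\<psi>!k))) - int (dlen G (fst (\<psi>!(k-1)))) = of_bool (t = SU) - of_bool (t = SD)"
    and "int (fst (snd (\<psi>!k))) - int (fst (snd (\<psi>!(k-1)))) = of_bool (t = RU) - of_bool (t = LD)"
    and "int (snd (snd (\<psi>!k))) - int (snd (snd (\<psi>!(k-1)))) = of_bool (t = LU) - of_bool (t = RD)"
  using assms by (cases t; auto simp: step_def edgesA_def edgesB_def ext2_def dlen_dext)+

end

locale toom_cycle_in = graded_dgraph G for G :: "'d dgraph" +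
  fixes n :: nat and \<psi> :: "'d gvert list"
  assumes cycle: "toom_cycle G n \<psi>"
begin

abbreviation l :: nat where "l \<equiv> length \<psi> - 1"

definition steps :: "stype \<Rightarrow> nat set" where
  "steps t = {k \<in> {1..l}. step G n \<psi> k t}"

lemma finite_steps: "finite (steps t)"
  by (simp add: steps_def)

lemma nsteps_eq_card_steps: "nsteps G n \<psi> t = card (steps t)"
  by (simp add: nsteps_def steps_def)

lemma
  shows walk: "is_walk G n \<psi>"
    and two_le_l: "2 \<le> l"
    and first_vertex: "\<psi>!0 = groot G"
    and last_vertex: "\<psi>!l = groot G"
    and first_step: "step G n \<psi> 1 SU \<or> step G n \<psi> 1 RU"
    and last_step: "step G n \<psi> l SD \<or> step G n \<psi> l RD"
    and inner_turn: "\<And>k. 0 < k \<Longrightarrow> k < l \<Longrightarrow> \<psi>!k \<in> inner G n \<Longrightarrow>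
           \<exists>(s, t) \<in> allowed_inner. step G n \<psi> k s \<and> step G n \<psi> (Suc k) t"
    and bnd_turn: "\<And>k. 0 < k \<Longrightarrow> k < l \<Longrightarrow> \<psi>!k \<in> bnd G n \<Longrightarrow>
           \<exists>(s, t) \<in> allowed_bnd. step G n \<psi> k s \<and> step G n \<psi> (Suc k) t"
    and peaks_distinct: "\<And>k m. k \<in> N_ast G n \<psi> \<Longrightarrow> m \<in> N_ast G n \<psi> \<Longrightarrow> k \<noteq> m \<Longrightarrow>
           \<psi>!k \<noteq> \<psi>!m"
  using cycle unfolding toom_cycle_def Let_def Suc_eq_plus1 by blast+

lemma less_length_iff: "k < length \<psi> \<longleftrightarrow> k \<le> l"
  using walk by (cases \<psi>) (auto simp: is_walk_def)

lemma nth_in_verts: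
  assumes "k \<le> l"
  shows "\<psi>!k \<in> verts G n"
proof -
  have "k < length \<psi>"
    using assms less_length_iff by blast
  then show ?thesis
    using walk by (auto simp: is_walk_def)
qed

lemma lvl_nth_le: "k \<le> l \<Longrightarrow> lvl G (\<psi>!k) \<le> 2 * n"
  using nth_in_verts[of k] by (cases "\<psi>!k") (auto simp: verts_def)

lemma bnd_iff_not_inner: "k \<le> l \<Longrightarrow> \<psi>!k \<in> bnd G n \<longleftrightarrow> \<psi>!k \<notin> inner G n"
  using nth_in_verts[of k] lvl_nth_le[of k] by (auto simp: bnd_def inner_def)

lemma inner_if_odd_lvl:
  assumes "k \<le> l" and "odd (lvl G (\<psi>!k))"
  shows "\<psi>!k \<in> inner G n"
proof -
  have "lvl G (\<psi>!k) \<noteq> 2 * n"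
    using assms(2) by auto
  then show ?thesis
    using nth_in_verts[OF assms(1)] lvl_nth_le[OF assms(1)] by (auto simp: inner_def)
qed

lemma step_exists_in_walk: "k \<in> {1..l} \<Longrightarrow> \<exists>t. step G n \<psi> k t"
  using step_exists[OF walk] less_length_iff by auto

lemma first_step_SU: "step G n \<psi> 1 SU"
proof -
  have "\<not> step G n \<psi> 1 RU"
  proof
    assume "step G n \<psi> 1 RU"
    then have "odd (lvl G (\<psi>!0))"
      using lvl_step_up[of n \<psi> 1 RU] by simp
    then show False
      using first_vertex lvl_groot by simp
  qed
  then show ?thesis
    using first_step by blast
qed

lemma groot_notin_bnd: "groot G \<notin> bnd G n"
proof -
  have "groot G \<in> inner G n"
    using first_step_SU first_vertex by (auto simp: step_def edgesA_def)
  then show ?thesis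
    by (auto simp: inner_def bnd_def)
qed

lemma steps_less_l:
  assumes "k \<in> steps t" and "t \<noteq> SD" and "t \<noteq> RD"
  shows "k < l"
proof -
  have k: "k \<le> l" "step G n \<psi> k t"
    using assms(1) by (auto simp: steps_def)
  have "k \<noteq> l"
    using last_step step_unique[OF k(2)] assms(2,3) by metis
  with k(1) show ?thesis by simp
qed

lemma steps_greater_1:
  assumes "k \<in> steps t" and "t \<noteq> SU"
  shows "1 < k"
proof -
  have k: "1 \<le> k" "step G n \<psi> k t"
    using assms(1) by (auto simp: steps_def)
  have "k \<noteq> 1"
    using first_step_SU step_unique[OF k(2)] assms(2) by metis
  with k(1) show ?thesis by simp
qed

lemma inner_turn_allowed:
  assumes "0 < k" "k < l" "\<psi>!k \<in> inner G n" "step G n \<psi> k s" "step G n \<psi> (Suc k) t"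
  shows "(s, t) \<in> allowed_inner"
  using inner_turn[OF assms(1-3)] step_unique[OF assms(4)] step_unique[OF assms(5)] by fast

lemma bnd_turn_allowed:
  assumes "0 < k" "k < l" "\<psi>!k \<in> bnd G n" "step G n \<psi> k s" "step G n \<psi> (Suc k) t"
  shows "(s, t) \<in> allowed_bnd"
  using bnd_turn[OF assms(1-3)] step_unique[OF assms(4)] step_unique[OF assms(5)] by fast

lemma card_steps_eq_if_balanced:
  fixes f :: "nat \<Rightarrow> int"
  assumes "\<And>k t. step G n \<psi> k t \<Longrightarrow> f k - f (k - 1) = of_bool (t = t\<^sub>1) - of_bool (t = t\<^sub>2)"
    and "f l = f 0"
  shows "card (steps t\<^sub>1) = card (steps t\<^sub>2)"
proof -
  have "int (card (steps t\<^sub>1)) - int (card (steps t\<^sub>2)) = f l - f 0"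
  proof (rule card_diff_eq_telescoping)
    show "steps t\<^sub>1 \<subseteq> {0<..l}" and "steps t\<^sub>2 \<subseteq> {0<..l}"
      by (auto simp: steps_def)
  next
    fix k assume k: "k \<in> {0<..l}"
    then obtain t where t: "step G n \<psi> k t"
      using step_exists_in_walk[of k] by auto
    have "k \<in> steps t' \<longleftrightarrow> t' = t" for t'
    proof
      assume "k \<in> steps t'"
      then have "step G n \<psi> k t'"
        by (simp add: steps_def)
      then show "t' = t"
        using t by (rule step_unique)
    qed (use k t in \<open>simp add: steps_def\<close>)
    then show "f k - f (k - 1) = of_bool (k \<in> steps t\<^sub>1) - of_bool (k \<in> steps t\<^sub>2)"
      using assms(1)[OF t] by simp
  qed simp
  with assms(2) show ?thesis by simp
qed

lemma card_steps_SU_SD: "card (steps SU) = card (steps SD)"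
  by (rule card_steps_eq_if_balanced[where f = "\<lambda>k. int (dlen G (fst (\<psi>!k)))"])
    (fact step_coordinate_changes(1), simp only: first_vertex last_vertex)

lemma card_steps_RU_LD: "card (steps RU) = card (steps LD)"
  by (rule card_steps_eq_if_balanced[where f = "\<lambda>k. int (fst (snd (\<psi>!k)))"])
    (fact step_coordinate_changes(2), simp only: first_vertex last_vertex)

lemma card_steps_LU_RD: "card (steps LU) = card (steps RD)"
  by (rule card_steps_eq_if_balanced[where f = "\<lambda>k. int (snd (snd (\<psi>!k)))"])
    (fact step_coordinate_changes(3), simp only: first_vertex last_vertex)

lemma successor_step:
  assumes "k \<in> steps s" and "k < l" and "odd (lvl G (\<psi>!k))"
  shows "\<exists>t. (s, t) \<in> allowed_inner \<and> Suc k \<in> steps t"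
proof -
  have k: "0 < k" "step G n \<psi> k s"
    using assms(1) by (auto simp: steps_def)
  obtain t where t: "step G n \<psi> (Suc k) t"
    using step_exists_in_walk assms(2) by fastforce
  have "(s, t) \<in> allowed_inner"
    using inner_turn_allowed[OF k(1) assms(2) inner_if_odd_lvl k(2) t] assms(2,3) by simp
  with t assms(2) show ?thesis
    by (auto simp: steps_def)
qed

lemma predecessor_step:
  assumes "j \<in> steps t" and "1 < j" and "odd (lvl G (\<psi>!(j - 1)))"
  shows "\<exists>s. (s, t) \<in> allowed_inner \<and> j - 1 \<in> steps s"
proof -
  obtain k where j: "j = Suc k" and k: "0 < k" "k < l"
    using assms(1,2) by (cases j) (auto simp: steps_def)
  obtain s where s: "step G n \<psi> k s"
    using step_exists_in_walk k by fastforce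
  have "(s, t) \<in> allowed_inner"
    using inner_turn_allowed[OF k inner_if_odd_lvl s] assms j k by (simp add: steps_def)
  with s j k show ?thesis
    by (auto simp: steps_def)
qed

lemma steps_RU_eq: "steps RU = Suc ` steps SU"
proof (intro equalityI subsetI)
  fix j assume j: "j \<in> steps RU"
  have "1 < j"
    using steps_greater_1[OF j] by simp
  moreover have "odd (lvl G (\<psi>!(j - 1)))"
    using j lvl_step_up[of n \<psi> j RU] by (simp add: steps_def)
  ultimately obtain s where "(s, RU) \<in> allowed_inner" and "j - 1 \<in> steps s"
    using predecessor_step[OF j] by blast
  then have "j - 1 \<in> steps SU"
    by (auto simp: allowed_inner_def)
  with \<open>1 < j\<close> show "j \<in> Suc ` steps SU"
    by (metis Suc_diff_1 image_eqI less_trans zero_less_one)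
next
  fix j assume "j \<in> Suc ` steps SU"
  then obtain k where k: "k \<in> steps SU" and j: "j = Suc k"
    by blast
  have "k < l"
    using steps_less_l[OF k] by simp
  moreover have "odd (lvl G (\<psi>!k))"
    using k lvl_step_up[of n \<psi> k SU] by (simp add: steps_def)
  ultimately obtain t where "(SU, t) \<in> allowed_inner" and "Suc k \<in> steps t"
    using successor_step[OF k] by blast
  with j show "j \<in> steps RU"
    by (auto simp: allowed_inner_def)
qed

lemma steps_LU_eq: "steps LU = Suc ` steps LD"
proof (intro equalityI subsetI)
  fix j assume j: "j \<in> steps LU"
  have "1 < j"
    using steps_greater_1[OF j] by simp
  moreover have "odd (lvl G (\<psi>!(j - 1)))"
    using j lvl_step_up[of n \<psi> j LU] by (simp add: steps_def)
  ultimately obtain s where "(s, LU) \<in> allowed_inner" and "j - 1 \<in> steps s"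
    using predecessor_step[OF j] by blast
  then have "j - 1 \<in> steps LD"
    by (auto simp: allowed_inner_def)
  with \<open>1 < j\<close> show "j \<in> Suc ` steps LD"
    by (metis Suc_diff_1 image_eqI less_trans zero_less_one)
next
  fix j assume "j \<in> Suc ` steps LD"
  then obtain k where k: "k \<in> steps LD" and j: "j = Suc k"
    by blast
  have "k < l"
    using steps_less_l[OF k] by simp
  moreover have "odd (lvl G (\<psi>!k))"
    using k lvl_step_down[of n \<psi> k LD] by (simp add: steps_def)
  ultimately obtain t where "(LD, t) \<in> allowed_inner" and "Suc k \<in> steps t"
    using successor_step[OF k] by blast
  with j show "j \<in> steps LU"
    by (auto simp: allowed_inner_def)
qed

lemma nsteps_eq_card_steps_SU: "nsteps G n \<psi> t = card (steps SU)"
proof -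
  have "card (steps RU) = card (steps SU)" and "card (steps LU) = card (steps LD)"
    unfolding steps_RU_eq steps_LU_eq by (simp_all add: card_image)
  then show ?thesis
    by (cases t) (simp_all add: nsteps_eq_card_steps card_steps_SU_SD[symmetric] card_steps_RU_LD[symmetric]
        card_steps_LU_RD[symmetric])
qed

lemma step_down_iff_not_up:
  assumes "k \<in> {1..l}"
  shows "step_down G n \<psi> k \<longleftrightarrow> \<not> step_up G n \<psi> k"
proof -
  obtain t where t: "step G n \<psi> k t"
    using step_exists_in_walk[OF assms] by blast
  then have "step G n \<psi> k t' \<longleftrightarrow> t' = t" for t'
    using step_unique by blast
  then show ?thesis
    unfolding step_up_iff step_down_iff by auto
qed

lemma N_circ_eq_steps_LD: "N_circ G n \<psi> = steps LD"
proof (intro equalityI subsetI)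
  fix k assume "k \<in> N_circ G n \<psi>"
  then have k: "0 < k" "k < l" and "step_down G n \<psi> k" "step_up G n \<psi> (Suc k)"
    by (auto simp: N_circ_def)
  then obtain s t where s: "\<not> is_up s" "step G n \<psi> k s" and t: "is_up t" "step G n \<psi> (Suc k) t"
    unfolding step_up_iff step_down_iff by blast
  have "\<psi>!k \<notin> bnd G n"
    using bnd_turn_allowed[OF k _ s(2) t(2)] allowed_bnd_up_down s(1) by blast
  then have "(s, t) \<in> allowed_inner"
    using inner_turn_allowed[OF k _ s(2) t(2)] bnd_iff_not_inner k(2) by simp
  then have "s = LD"
    using allowed_inner_down_up s(1) t(1) by blast
  with k s(2) show "k \<in> steps LD"
    by (simp add: steps_def)
next
  fix k assume k: "k \<in> steps LD"
  have "k < l"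
    using steps_less_l[OF k] by simp
  moreover have "odd (lvl G (\<psi>!k))"
    using k lvl_step_down[of n \<psi> k LD] by (simp add: steps_def)
  ultimately obtain t where "(LD, t) \<in> allowed_inner" and "Suc k \<in> steps t"
    using successor_step[OF k] by blast
  then have "step G n \<psi> (Suc k) LU"
    by (auto simp: allowed_inner_def steps_def)
  with k \<open>k < l\<close> show "k \<in> N_circ G n \<psi>"
    by (auto simp: N_circ_def steps_def step_up_def step_down_def)
qed

lemma N_ast_eq_outcome_indices: "N_ast G n \<psi> = {k. 0 < k \<and> k < l \<and> \<psi>!k \<in> bnd G n}"
proof (intro equalityI subsetI)
  fix k assume "k \<in> N_ast G n \<psi>"
  then have k: "0 < k" "k < l" and "step_up G n \<psi> k" "step_down G n \<psi> (Suc k)"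
    by (auto simp: N_ast_def)
  then obtain s t where s: "is_up s" "step G n \<psi> k s" and t: "\<not> is_up t" "step G n \<psi> (Suc k) t"
    unfolding step_up_iff step_down_iff by blast
  have "\<psi>!k \<notin> inner G n"
    using inner_turn_allowed[OF k _ s(2) t(2)] allowed_inner_up_up s(1) t(1) by blast
  with k show "k \<in> {k. 0 < k \<and> k < l \<and> \<psi>!k \<in> bnd G n}"
    using bnd_iff_not_inner by simp
next
  fix k assume "k \<in> {k. 0 < k \<and> k < l \<and> \<psi>!k \<in> bnd G n}"
  then have k: "0 < k" "k < l" "\<psi>!k \<in> bnd G n"
    by auto
  obtain s t where s: "step G n \<psi> k s" and t: "step G n \<psi> (Suc k) t"
    using step_exists_in_walk[of k] step_exists_in_walk[of "Suc k"] k by auto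
  have "is_up s" and "\<not> is_up t"
    using allowed_bnd_up_down[OF bnd_turn_allowed[OF k s t]] by simp_all
  with k s t show "k \<in> N_ast G n \<psi>"
    unfolding N_ast_def step_up_iff step_down_iff by auto
qed

lemma card_N_ast: "card (N_ast G n \<psi>) = Suc (card (N_circ G n \<psi>))"
proof -
  define g where "g k = (of_bool (step_up G n \<psi> (Suc k)) :: int)" for k
  have "int (card (N_circ G n \<psi>)) - int (card (N_ast G n \<psi>)) = g (l - 1) - g 0"
  proof (rule card_diff_eq_telescoping)
    show "N_circ G n \<psi> \<subseteq> {0<..l - 1}" and "N_ast G n \<psi> \<subseteq> {0<..l - 1}"
      by (auto simp: N_circ_def N_ast_def)
  next
    fix k assume k: "k \<in> {0<..l - 1}"
    then have "step_down G n \<psi> k \<longleftrightarrow> \<not> step_up G n \<psi> k"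
      and "step_down G n \<psi> (Suc k) \<longleftrightarrow> \<not> step_up G n \<psi> (Suc k)"
      using step_down_iff_not_up by auto
    with k show "g k - g (k - 1) = of_bool (k \<in> N_circ G n \<psi>) - of_bool (k \<in> N_ast G n \<psi>)"
      by (auto simp: g_def N_circ_def N_ast_def)
  qed simp
  moreover have "g (l - 1) = 0"
  proof -
    have "step_down G n \<psi> l"
      using last_step by (auto simp: step_down_def)
    then have "\<not> step_up G n \<psi> l"
      using step_down_iff_not_up[of l] two_le_l by simp
    moreover have "Suc (l - 1) = l"
      using two_le_l by simp
    ultimately show ?thesis
      unfolding g_def by simp
  qed
  moreover have "g 0 = 1"
    using first_step_SU by (simp add: g_def step_up_def)
  ultimately show ?thesis
    by simp
qed

lemma outcomes_eq_image_N_ast: "set \<psi> \<inter> bnd G n = (\<lambda>k. \<psi>!k) ` N_ast G n \<psi>"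
proof (intro equalityI subsetI)
  fix x assume "x \<in> set \<psi> \<inter> bnd G n"
  then obtain k where k: "k \<le> l" "x = \<psi>!k" "x \<in> bnd G n"
    by (auto simp: in_set_conv_nth less_length_iff)
  moreover have "k \<noteq> 0" and "k \<noteq> l"
    using k(2,3) groot_notin_bnd first_vertex last_vertex by metis+
  ultimately show "x \<in> (\<lambda>k. \<psi>!k) ` N_ast G n \<psi>"
    by (auto simp: N_ast_eq_outcome_indices)
qed (auto simp: N_ast_eq_outcome_indices less_length_iff[symmetric])

lemma card_outcomes: "card (set \<psi> \<inter> bnd G n) = card (N_ast G n \<psi>)"
proof -
  have "inj_on (\<lambda>k. \<psi>!k) (N_ast G n \<psi>)"
    using peaks_distinct by (auto intro: inj_onI)
  then show ?thesis
    unfolding outcomes_eq_image_N_ast by (rule card_image)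
qed

theorem step_counts_and_outcomes:
  "\<exists>m \<ge> 1. (\<forall>t. nsteps G n \<psi> t = m) \<and> card (set \<psi> \<inter> bnd G n) = m + 1"
proof (intro exI conjI allI)
  have "1 \<in> steps SU"
    using first_step_SU two_le_l by (simp add: steps_def)
  then have "0 < card (steps SU)"
    using finite_steps card_gt_0_iff by blast
  then show "1 \<le> card (steps SU)"
    by simp
  show "nsteps G n \<psi> t = card (steps SU)" for t
    by (rule nsteps_eq_card_steps_SU)
  show "card (set \<psi> \<inter> bnd G n) = card (steps SU) + 1"
    using card_outcomes card_N_ast N_circ_eq_steps_LD nsteps_eq_card_steps_SU[of LD]
    by (simp add: nsteps_eq_card_steps)
qed

end

lemma graded_T_graph: "graded_dgraph T_graph"
  by unfold_locales (simp_all add: T_graph_def)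

lemma graded_N2_graph: "graded_dgraph N2_graph"
  by unfold_locales (simp_all add: N2_graph_def len2_def ext2_def)

theorem lemma11:
  fixes n :: nat
  assumes "n \<ge> 1"
  shows "(\<forall>\<psi>. toom_cycle T_graph n \<psi> \<longrightarrow>
            (\<exists>m \<ge> 1. (\<forall>t. nsteps T_graph n \<psi> t = m) \<and>
                     card (set \<psi> \<inter> bnd T_graph n) = m + 1)) \<and>
         (\<forall>\<psi>. toom_cycle N2_graph n \<psi> \<longrightarrow>
            (\<exists>m \<ge> 1. (\<forall>t. nsteps N2_graph n \<psi> t = m) \<and>
                     card (set \<psi> \<inter> bnd N2_graph n) = m + 1))"
  using toom_cycle_in.step_counts_and_outcomes[OF toom_cycle_in.intro[OF graded_T_graph]]
    toom_cycle_in.step_counts_and_outcomes[OF toom_cycle_in.intro[OF graded_N2_graph]]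
  by (simp add: toom_cycle_in_axioms_def)

end
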